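(* Let $k\ge1$. For all $0\le y_1\le y_2\le\dots\le y_{2k-1}\le1$ we have $\widetilde H_k(y_1,\dots,y_{2k-1})\le0$, where \[ \widetilde H_k(y_1,\dots,y_{2k-1}):=\sum_{i=0}^{k-1}(1-y_{k+i})\,y_{k+i+1}\cdots y_{2k-1}\;f_k(y_1)\cdots f_k(y_i)\;-\;\prod_{i=1}^{k}f_k(y_i), \] with empty products equal to $1$.
   Context: For an integer $k\ge1$, $f_k:[0,1]\to[0,1]$ denotes the unique decreasing function satisfying $f_k(x)^k-f_k(x)^{k+1}=x^k-x^{k+1}$ for all $x\in[0,1]$; it is continuous with $f_k(0)=1$, $f_k(1)=0$. *)

theory Defs
  imports "HOL-Analysis.Analysis"
begin

text \<open>f_k: the unique decreasing function [0,1] -> [0,1] with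
  f(x)^k - f(x)^(k+1) = x^k - x^(k+1); extended by 0 outside [0,1] to make it unique as a HOL function.\<close>
definition fk :: "nat \<Rightarrow> real \<Rightarrow> real" where
  "fk k = (THE g. (\<forall>x\<in>{0..1}. g x \<in> {0..1} \<and> g x ^ k - g x ^ (k+1) = x ^ k - x ^ (k+1))
                 \<and> antimono_on {0..1} g \<and> (\<forall>x. x \<notin> {0..1} \<longrightarrow> g x = 0))"

definition Htilde :: "nat \<Rightarrow> (nat \<Rightarrow> real) \<Rightarrow> real" where
  "Htilde k y = (\<Sum>i=0..k-1. (1 - y (k+i)) * (\<Prod>j=k+i+1..2*k-1. y j) * (\<Prod>j=1..i. fk k (y j)))
                - (\<Prod>i=1..k. fk k (y i))"

end

theory Submission
  imports Defs
begin

(*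
  Write h(t) = t^k - t^(k+1) and c = k/(k+1).  On [0,1] the function h
  increases strictly on [0,c] and decreases strictly on [c,1], so f_k x is the "other"
  point of [0,1] with the same h-value; we construct it explicitly (hconj) and show
  that it is the unique function described in the definition of fk.

  Put x = y_k, p = f_k(x), z_i = y_(k+i) and A_j = f_k(y_1) ... f_k(y_j).  Then
  Htilde = D_k - A_k, where D obeys D_0 = 0, D_(j+1) = z_j D_j + (1 - z_j) A_j.
  With S_j = (1-x) * sum_(m<j) x^m / p^(m+1) one shows by induction D_j <= A_j S_j,
  using x <= z_j, p <= f_k(y_i) (f_k is decreasing) and p S_(j+1) = (1-x) + x S_j.
  Finally S_k = 1 is a geometric sum, equivalent to h(p) = h(x); hence D_k <= A_k.
*)

section \<open>The polynomial \<open>h\<^sub>k\<close>\<close>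

definition hk :: "nat \<Rightarrow> real \<Rightarrow> real" where
  "hk k t = t ^ k - t ^ (k+1)"

text \<open>The maximum point of \<open>hk k\<close> on \<open>[0,1]\<close>.\<close>
definition ck :: "nat \<Rightarrow> real" where
  "ck k = real k / (real k + 1)"

lemma ck_bounds: "1 \<le> k \<Longrightarrow> 0 < ck k \<and> ck k < 1"
  unfolding ck_def by (auto simp: field_simps)

lemma hk_0: "1 \<le> k \<Longrightarrow> hk k 0 = 0"
  unfolding hk_def by simp

lemma hk_1: "hk k 1 = 0"
  unfolding hk_def by simp

lemma hk_nonneg: "0 \<le> t \<Longrightarrow> t \<le> 1 \<Longrightarrow> 0 \<le> hk k t"
  unfolding hk_def by (simp add: mult_left_le_one_le)

lemma hk_cont: "continuous_on S (hk k)"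
  unfolding hk_def by (intro continuous_intros)

text \<open>The derivative \<open>t^(k-1) (k - (k+1) t)\<close> changes sign exactly at \<open>ck k\<close>.\<close>
lemma hk_deriv:
  assumes "1 \<le> k"
  shows "DERIV (hk k) t :> t ^ (k-1) * (real k - (real k + 1) * t)"
proof -
  obtain m where k: "k = Suc m"
    using assms by (cases k) auto
  have "DERIV (\<lambda>t. t ^ Suc m - t ^ Suc (Suc m)) t :> real (Suc m) * t ^ m - real (Suc (Suc m)) * t ^ Suc m"
    using DERIV_diff[OF DERIV_pow[of "Suc m"] DERIV_pow[of "Suc (Suc m)"]] by simp
  then show ?thesis
    unfolding hk_def k by (simp add: algebra_simps)
qed

lemma hk_strict_inc:
  assumes k: "1 \<le> k" and "0 \<le> a" "a < b" "b \<le> ck k"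
  shows "hk k a < hk k b"
proof (rule DERIV_pos_imp_increasing_open[OF \<open>a < b\<close> _ hk_cont])
  fix t assume "a < t" "t < b"
  have "(real k + 1) * t < (real k + 1) * b"
    using \<open>t < b\<close> by simp
  also have "\<dots> \<le> real k"
    using \<open>b \<le> ck k\<close> unfolding ck_def by (simp add: field_simps)
  finally have "0 < t" "(real k + 1) * t < real k"
    using \<open>a < t\<close> \<open>0 \<le> a\<close> by auto
  then have "0 < t ^ (k-1) * (real k - (real k + 1) * t)"
    by simp
  then show "\<exists>d. DERIV (hk k) t :> d \<and> 0 < d"
    using hk_deriv[OF k] by blast
qed

lemma hk_strict_dec:
  assumes k: "1 \<le> k" and "ck k \<le> a" "a < b" "b \<le> 1"
  shows "hk k b < hk k a"
proof (rule DERIV_neg_imp_decreasing_open[OF \<open>a < b\<close> _ hk_cont])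
  fix t assume "a < t" "t < b"
  have "real k \<le> (real k + 1) * a"
    using \<open>ck k \<le> a\<close> unfolding ck_def by (simp add: field_simps)
  also have "\<dots> < (real k + 1) * t"
    using \<open>a < t\<close> by simp
  finally have "0 < t" "real k < (real k + 1) * t"
    using \<open>a < t\<close> \<open>ck k \<le> a\<close> ck_bounds[OF k] by auto
  then have "t ^ (k-1) * (real k - (real k + 1) * t) < 0"
    by (simp add: mult_pos_neg)
  then show "\<exists>d. DERIV (hk k) t :> d \<and> d < 0"
    using hk_deriv[OF k] by blast
qed

lemma hk_inc: "1 \<le> k \<Longrightarrow> 0 \<le> a \<Longrightarrow> a \<le> b \<Longrightarrow> b \<le> ck k \<Longrightarrow> hk k a \<le> hk k b"
  using hk_strict_inc by (cases "a = b") (auto intro: less_imp_le)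

lemma hk_dec: "1 \<le> k \<Longrightarrow> ck k \<le> a \<Longrightarrow> a \<le> b \<Longrightarrow> b \<le> 1 \<Longrightarrow> hk k b \<le> hk k a"
  using hk_strict_dec by (cases "a = b") (auto intro: less_imp_le)

lemma hk_inj_low:
  "1 \<le> k \<Longrightarrow> a \<in> {0..ck k} \<Longrightarrow> b \<in> {0..ck k} \<Longrightarrow> hk k a = hk k b \<Longrightarrow> a = b"
  using hk_strict_inc by (metis atLeastAtMost_iff linorder_neqE_linordered_idom order_less_irrefl)

lemma hk_inj_high:
  "1 \<le> k \<Longrightarrow> a \<in> {ck k..1} \<Longrightarrow> b \<in> {ck k..1} \<Longrightarrow> hk k a = hk k b \<Longrightarrow> a = b"
  using hk_strict_dec by (metis atLeastAtMost_iff linorder_neqE_linordered_idom order_less_irrefl)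

lemma hk_le_max: "1 \<le> k \<Longrightarrow> 0 \<le> t \<Longrightarrow> t \<le> 1 \<Longrightarrow> hk k t \<le> hk k (ck k)"
  using hk_inc[of k t "ck k"] hk_dec[of k "ck k" t] ck_bounds[of k]
  by (cases "t \<le> ck k") auto

lemma hk_less_max: "1 \<le> k \<Longrightarrow> 0 \<le> t \<Longrightarrow> t \<le> 1 \<Longrightarrow> t \<noteq> ck k \<Longrightarrow> hk k t < hk k (ck k)"
  using hk_strict_inc[of k t "ck k"] hk_strict_dec[of k "ck k" t] ck_bounds[of k]
  by (cases "t \<le> ck k") auto

section \<open>The function \<open>f\<^sub>k\<close>\<close>

text \<open>The conjugate point of \<open>x \<in> [0,1]\<close>: the point on the other side of \<open>ck k\<close> with the
  same value of \<open>hk k\<close>.  It is our explicit model of \<open>fk k\<close>.\<close>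
definition hconj :: "nat \<Rightarrow> real \<Rightarrow> real" where
  "hconj k x = (if x \<in> {0..1} then
     (if x \<le> ck k then (SOME t. t \<in> {ck k..1} \<and> hk k t = hk k x)
      else (SOME t. t \<in> {0..ck k} \<and> hk k t = hk k x)) else 0)"

text \<open>Left of the maximum, the conjugate point lies on the right (intermediate value theorem
  on \<open>[ck k, 1]\<close>, where \<open>hk k\<close> falls from its maximum to \<open>0\<close>).\<close>
lemma hconj_low:
  assumes k: "1 \<le> k" and x: "0 \<le> x" "x \<le> ck k"
  shows "hconj k x \<in> {ck k..1} \<and> hk k (hconj k x) = hk k x"
proof -
  have c: "0 < ck k" "ck k < 1" using ck_bounds[OF k] by auto
  have "\<exists>t. t \<in> {ck k..1} \<and> hk k t = hk k x"
    using IVT2'[of "hk k" 1 "hk k x" "ck k", OF _ _ _ hk_cont] hk_1 hk_nonneg[of x k]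
      hk_le_max[OF k, of x] x c
    by auto
  then have "(SOME t. t \<in> {ck k..1} \<and> hk k t = hk k x) \<in> {ck k..1}
      \<and> hk k (SOME t. t \<in> {ck k..1} \<and> hk k t = hk k x) = hk k x"
    by (rule someI_ex)
  moreover have "hconj k x = (SOME t. t \<in> {ck k..1} \<and> hk k t = hk k x)"
    unfolding hconj_def using x c by auto
  ultimately show ?thesis by simp
qed

lemma hconj_high:
  assumes k: "1 \<le> k" and x: "ck k \<le> x" "x \<le> 1"
  shows "hconj k x \<in> {0..ck k} \<and> hk k (hconj k x) = hk k x"
proof (cases "x = ck k")
  case True
  then show ?thesis
    using hconj_low[OF k, of x] ck_bounds[OF k] hk_inj_high[OF k, of "hconj k x" x] by auto
next
  case False
  have c: "0 < ck k" "ck k < 1" using ck_bounds[OF k] by auto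
  have "\<exists>t. t \<in> {0..ck k} \<and> hk k t = hk k x"
    using IVT'[of "hk k" 0 "hk k x" "ck k", OF _ _ _ hk_cont] hk_0[OF k] hk_nonneg[of x k]
      hk_le_max[OF k, of x] x c
    by auto
  then have "(SOME t. t \<in> {0..ck k} \<and> hk k t = hk k x) \<in> {0..ck k}
      \<and> hk k (SOME t. t \<in> {0..ck k} \<and> hk k t = hk k x) = hk k x"
    by (rule someI_ex)
  moreover have "hconj k x = (SOME t. t \<in> {0..ck k} \<and> hk k t = hk k x)"
    unfolding hconj_def using x c False by auto
  ultimately show ?thesis by simp
qed

lemma hconj_range:
  "1 \<le> k \<Longrightarrow> x \<in> {0..1} \<Longrightarrow> hconj k x \<in> {0..1} \<and> hk k (hconj k x) = hk k x"
  using hconj_low[of k x] hconj_high[of k x] ck_bounds[of k] by (cases "x \<le> ck k") auto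

text \<open>The conjugate point depends decreasingly on \<open>x\<close>: on each side of \<open>ck k\<close> this follows
  from the opposite monotonicity of \<open>hk k\<close> on the two sides.\<close>
lemma hconj_antimono:
  assumes k: "1 \<le> k" and "0 \<le> a" "a \<le> b" "b \<le> 1"
  shows "hconj k b \<le> hconj k a"
proof -
  consider "b \<le> ck k" | "ck k \<le> a" | "a \<le> ck k" "ck k \<le> b" by linarith
  then show ?thesis
  proof cases
    case 1
    have ga: "hconj k a \<in> {ck k..1}" "hk k (hconj k a) = hk k a"
      and gb: "hconj k b \<in> {ck k..1}" "hk k (hconj k b) = hk k b"
      using hconj_low[OF k, of a] hconj_low[OF k, of b] 1 assms by auto
    have "hk k a \<le> hk k b" using hk_inc[OF k, of a b] 1 assms by auto
    then show ?thesis
      using ga gb hk_strict_dec[OF k, of "hconj k a" "hconj k b"] by force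
  next
    case 2
    have ga: "hconj k a \<in> {0..ck k}" "hk k (hconj k a) = hk k a"
      and gb: "hconj k b \<in> {0..ck k}" "hk k (hconj k b) = hk k b"
      using hconj_high[OF k, of a] hconj_high[OF k, of b] 2 assms by auto
    have "hk k b \<le> hk k a" using hk_dec[OF k, of a b] 2 assms by auto
    then show ?thesis
      using ga gb hk_strict_inc[OF k, of "hconj k a" "hconj k b"] by force
  next
    case 3
    then show ?thesis using hconj_low[OF k, of a] hconj_high[OF k, of b] assms by auto
  qed
qed

definition fk_spec :: "nat \<Rightarrow> (real \<Rightarrow> real) \<Rightarrow> bool" where
  "fk_spec k g \<longleftrightarrow> (\<forall>x\<in>{0..1}. g x \<in> {0..1} \<and> g x ^ k - g x ^ (k+1) = x ^ k - x ^ (k+1))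
     \<and> antimono_on {0..1} g \<and> (\<forall>x. x \<notin> {0..1} \<longrightarrow> g x = 0)"

lemma fk_spec_hconj: "1 \<le> k \<Longrightarrow> fk_spec k (hconj k)"
  unfolding fk_spec_def monotone_on_def
  using hconj_range[of k] hconj_antimono[of k] by (auto simp: hk_def hconj_def)

lemma fk_specD:
  assumes "fk_spec k g"
  shows "\<And>t. t \<in> {0..1} \<Longrightarrow> g t \<in> {0..1} \<and> hk k (g t) = hk k t"
    and "\<And>a b. 0 \<le> a \<Longrightarrow> a \<le> b \<Longrightarrow> b \<le> 1 \<Longrightarrow> g b \<le> g a"
  using assms unfolding fk_spec_def hk_def monotone_on_def by auto

text \<open>A solution cannot fix a point \<open>x < ck k\<close>: otherwise, by injectivity of \<open>hk k\<close> on
  \<open>[0, ck k]\<close> and monotonicity, it would fix every point between \<open>x\<close> and \<open>ck k\<close>, while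
  being decreasing.\<close>
lemma fk_spec_low:
  assumes k: "1 \<le> k" and g: "fk_spec k g" and x: "0 \<le> x" "x < ck k"
  shows "ck k \<le> g x"
proof (rule ccontr)
  note hg = fk_specD(1)[OF g] and anti = fk_specD(2)[OF g]
  have c: "ck k < 1" using ck_bounds[OF k] by auto
  assume "\<not> ck k \<le> g x"
  then have "g x = x" using hk_inj_low[OF k, of "g x" x] hg[of x] x c by auto
  define b where "b = (x + ck k) / 2"
  have b: "x < b" "b < ck k" using x unfolding b_def by auto
  have "g b \<le> x" using anti[of x b] \<open>g x = x\<close> x b c by auto
  moreover have "g b = b" using hk_inj_low[OF k, of "g b" b] hg[of b] x b c \<open>g b \<le> x\<close> by auto
  ultimately show False using b by auto
qed

lemma fk_spec_high:
  assumes k: "1 \<le> k" and g: "fk_spec k g" and x: "ck k < x" "x \<le> 1"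
  shows "g x \<le> ck k"
proof (rule ccontr)
  note hg = fk_specD(1)[OF g] and anti = fk_specD(2)[OF g]
  have c: "0 < ck k" using ck_bounds[OF k] by auto
  assume "\<not> g x \<le> ck k"
  then have "g x = x" using hk_inj_high[OF k, of "g x" x] hg[of x] x c by auto
  define b where "b = (x + ck k) / 2"
  have b: "b < x" "ck k < b" using x unfolding b_def by auto
  have "x \<le> g b" using anti[of b x] \<open>g x = x\<close> x b c by auto
  moreover have "g b = b" using hk_inj_high[OF k, of "g b" b] hg[of b] x b c \<open>x \<le> g b\<close> by auto
  ultimately show False using b by auto
qed

text \<open>Uniqueness: by the two lemmas above a solution takes values on the correct side of
  \<open>ck k\<close>, where \<open>hk k\<close> is injective; at \<open>ck k\<close> itself the maximum is attained only once.\<close>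
lemma fk_spec_unique:
  assumes k: "1 \<le> k" and g: "fk_spec k g"
  shows "g = hconj k"
proof
  fix x :: real
  note hg = fk_specD(1)[OF g]
  show "g x = hconj k x"
  proof (cases "x \<in> {0..1}")
    case False
    then show ?thesis using g unfolding fk_spec_def hconj_def by auto
  next
    case x: True
    consider "x < ck k" | "x = ck k" | "ck k < x" by linarith
    then show ?thesis
    proof cases
      case 1
      then show ?thesis
        using fk_spec_low[OF k g, of x] hconj_low[OF k, of x] hg[of x] x
          hk_inj_high[OF k, of "g x" "hconj k x"] by auto
    next
      case 2
      then show ?thesis
        using hk_less_max[OF k, of "g x"] hk_less_max[OF k, of "hconj k x"] hg[of x]
          hconj_range[OF k x] x by fastforce
    next
      case 3
      then show ?thesis
        using fk_spec_high[OF k g, of x] hconj_high[OF k, of x] hg[of x] x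
          hk_inj_low[OF k, of "g x" "hconj k x"] by auto
    qed
  qed
qed

lemma fk_eq_hconj: "1 \<le> k \<Longrightarrow> fk k = hconj k"
  unfolding fk_def using fk_spec_hconj fk_spec_unique unfolding fk_spec_def
  by (intro the_equality) blast+

lemma fk_range: "1 \<le> k \<Longrightarrow> x \<in> {0..1} \<Longrightarrow> fk k x \<in> {0..1} \<and> hk k (fk k x) = hk k x"
  using hconj_range by (simp add: fk_eq_hconj)

lemma fk_antimono: "1 \<le> k \<Longrightarrow> 0 \<le> a \<Longrightarrow> a \<le> b \<Longrightarrow> b \<le> 1 \<Longrightarrow> fk k b \<le> fk k a"
  using hconj_antimono by (simp add: fk_eq_hconj)

text \<open>Only the point \<open>1\<close> is mapped to \<open>0\<close>, since \<open>hk k\<close> vanishes on \<open>[0,1]\<close> only at \<open>0\<close> and \<open>1\<close>.\<close>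
lemma fk_pos:
  assumes k: "1 \<le> k" and x: "0 \<le> x" "x < 1"
  shows "0 < fk k x"
proof (cases "x \<le> ck k")
  case True
  then show ?thesis using hconj_low[OF k x(1)] ck_bounds[OF k] by (simp add: fk_eq_hconj[OF k])
next
  case False
  have "hk k 1 < hk k x" using hk_strict_dec[OF k, of x 1] False x by simp
  then have "hk k (fk k x) \<noteq> hk k 0" using fk_range[OF k, of x] x hk_0[OF k] hk_1 by simp
  moreover have "0 \<le> fk k x" using fk_range[OF k, of x] x by simp
  ultimately show ?thesis by (cases "fk k x = 0") auto
qed

lemma fk_fixed_point:
  assumes k: "1 \<le> k" and x: "x \<in> {0..1}" and fixed: "fk k x = x"
  shows "x = ck k"
proof (rule ccontr)
  assume "x \<noteq> ck k"
  then consider "x < ck k" | "ck k < x" by linarith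
  then show False
    using hconj_low[OF k, of x] hconj_high[OF k, of x] x fixed by cases (auto simp: fk_eq_hconj[OF k])
qed

section \<open>The comparison sequence \<open>S\<close>\<close>

text \<open>\<open>Sseq x p j\<close> bounds the ratio \<open>D\<^sub>j / A\<^sub>j\<close> of the recursion studied below.\<close>
definition Sseq :: "real \<Rightarrow> real \<Rightarrow> nat \<Rightarrow> real" where
  "Sseq x p n = (1 - x) * (\<Sum>m<n. x ^ m / p ^ (m+1))"

lemma Sseq_nonneg: "0 \<le> x \<Longrightarrow> x \<le> 1 \<Longrightarrow> 0 \<le> p \<Longrightarrow> 0 \<le> Sseq x p n"
  unfolding Sseq_def by (intro mult_nonneg_nonneg sum_nonneg) auto

lemma Sseq_mono: "0 \<le> x \<Longrightarrow> x \<le> 1 \<Longrightarrow> 0 \<le> p \<Longrightarrow> j \<le> n \<Longrightarrow> Sseq x p j \<le> Sseq x p n"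
  unfolding Sseq_def by (intro mult_left_mono sum_mono2) auto

text \<open>The recursion \<open>p S\<^sub>n\<^sub>+\<^sub>1 = (1 - x) + x S\<^sub>n\<close>, mirroring the recursion of \<open>Dsum\<close>.\<close>
lemma Sseq_Suc:
  assumes p: "0 < p"
  shows "p * Sseq x p (Suc n) = (1 - x) + x * Sseq x p n"
proof -
  define Q where "Q = (\<Sum>m<n. x ^ m / p ^ (m+1))"
  have shift: "(\<Sum>m<Suc n. x ^ m / p ^ (m+1)) = 1 / p + (x / p) * Q"
    unfolding Q_def by (subst sum.lessThan_Suc_shift) (simp add: sum_distrib_left)
  have "p * Sseq x p (Suc n) = (1 - x) * (p * (1 / p + (x / p) * Q))"
    unfolding Sseq_def shift by simp
  also have "\<dots> = (1 - x) * (1 + x * Q)"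
    using p by (simp add: field_simps)
  finally show ?thesis
    unfolding Sseq_def Q_def by (simp add: algebra_simps)
qed

text \<open>If \<open>p\<close> and \<open>x\<close> have the same value of \<open>hk k\<close>, i.e. \<open>p\<^sup>k (1-p) = x\<^sup>k (1-x)\<close>, and \<open>p \<noteq> x\<close>,
  the geometric sum \<open>Sseq x p k\<close> equals \<open>1\<close>; for \<open>p = x\<close> the sum is \<open>k (1-x) / x\<close>, which is \<open>1\<close>
  at the maximum point \<open>x = ck k\<close>.\<close>
lemma Sseq_eq_1:
  assumes k: "1 \<le> k" and x: "0 \<le> x" "x < 1" and p: "0 < p"
    and hp: "hk k p = hk k x"
    and px: "p = x \<Longrightarrow> x = ck k"
  shows "Sseq x p k = 1"
proof (cases "p = x")
  case True
  then have xc: "x = ck k" and x0: "0 < x" using px p by auto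
  have "Sseq x p k = (1 - x) * real k / x"
    unfolding Sseq_def using True x0 by (simp add: field_simps)
  also have "\<dots> = 1" using xc k x0 unfolding ck_def by (simp add: field_simps)
  finally show ?thesis .
next
  case False
  define r where "r = x / p"
  have r1: "r \<noteq> 1" using False p unfolding r_def by auto
  have "(\<Sum>m<k. x ^ m / p ^ (m+1)) = (\<Sum>m<k. r ^ m) / p"
    unfolding r_def using p by (simp add: sum_divide_distrib power_divide mult.commute)
  also have "\<dots> = (r ^ k - 1) / (r - 1) / p" using geometric_sum[OF r1] by simp
  finally have sum: "Sseq x p k = (1 - x) * (r ^ k - 1) / ((r - 1) * p)"
    unfolding Sseq_def by simp
  have "(1 - x) * (r ^ k - 1) * p ^ k = (x ^ k - x ^ (k+1)) - (1 - x) * p ^ k"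
    unfolding r_def using p by (simp add: field_simps power_divide)
  also have "\<dots> = (x - p) * p ^ k"
    using hp unfolding hk_def by (simp add: algebra_simps)
  finally have "(1 - x) * (r ^ k - 1) = x - p" using p by simp
  moreover have "(r - 1) * p = x - p" unfolding r_def using p by (simp add: field_simps)
  ultimately show ?thesis unfolding sum using False by simp
qed

lemma Sseq_fk:
  assumes k: "1 \<le> k" and x: "0 \<le> x" "x < 1"
  shows "Sseq x (fk k x) k = 1"
  using Sseq_eq_1[OF k x fk_pos[OF k x]] fk_range[OF k, of x] fk_fixed_point[OF k, of x] x
  by auto

section \<open>The recursion behind \<open>Htilde\<close>\<close>

definition Dsum :: "(nat \<Rightarrow> real) \<Rightarrow> (nat \<Rightarrow> real) \<Rightarrow> nat \<Rightarrow> real" where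
  "Dsum z A n = (\<Sum>i<n. (1 - z i) * (\<Prod>m\<in>{i+1..<n}. z m) * A i)"

lemma Dsum_Suc: "Dsum z A (Suc n) = z n * Dsum z A n + (1 - z n) * A n"
proof -
  have "(\<Sum>i<n. (1 - z i) * (\<Prod>m\<in>{i+1..<Suc n}. z m) * A i)
      = (\<Sum>i<n. z n * ((1 - z i) * (\<Prod>m\<in>{i+1..<n}. z m) * A i))"
    by (intro sum.cong refl) (simp add: prod.atLeastLessThan_Suc)
  then show ?thesis
    unfolding Dsum_def by (simp add: sum_distrib_left)
qed

text \<open>Since \<open>D\<^sub>n \<le> A\<^sub>n\<close>, replacing \<open>z\<^sub>n\<close> by the
  smaller weight \<open>x\<close> only increases \<open>D\<^sub>n\<^sub>+\<^sub>1\<close>, and then \<open>Sseq_Suc\<close> closes the induction.\<close>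
lemma Dsum_le_prod_Sseq:
  fixes z ph :: "nat \<Rightarrow> real"
  assumes x: "0 \<le> x" "x \<le> 1" and z: "\<And>i. i < n \<Longrightarrow> x \<le> z i \<and> z i \<le> 1"
    and p: "0 < p" and ph: "\<And>i. 1 \<le> i \<Longrightarrow> i \<le> n \<Longrightarrow> p \<le> ph i"
    and S: "Sseq x p n \<le> 1"
  shows "Dsum z (\<lambda>j. \<Prod>i=1..j. ph i) n \<le> (\<Prod>i=1..n. ph i) * Sseq x p n"
  using z ph S
proof (induction n)
  case 0
  then show ?case by (simp add: Dsum_def Sseq_def)
next
  case (Suc n)
  define A where "A = (\<lambda>j. \<Prod>i=1..j. ph i)"
  define D where "D = Dsum z A n"
  have zn: "x \<le> z n" "z n \<le> 1" using Suc.prems(1)[of n] by auto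
  have Sn: "0 \<le> Sseq x p n" "Sseq x p n \<le> 1"
    using Sseq_nonneg[OF x] Sseq_mono[OF x, of p n "Suc n"] Suc.prems(3) p by auto
  have IH: "D \<le> A n * Sseq x p n"
    unfolding D_def A_def using Suc Sn by simp
  have A0: "0 \<le> A n"
    unfolding A_def using Suc.prems(2) p by (intro prod_nonneg) (fastforce intro: order.trans[OF less_imp_le[OF p]])
  have "A n * Sseq x p n \<le> A n" using A0 Sn by (simp add: mult_left_le)
  then have DA: "D \<le> A n" using IH by simp
  have "Dsum z A (Suc n) = A n - z n * (A n - D)"
    unfolding D_def Dsum_Suc by (simp add: algebra_simps)
  also have "\<dots> \<le> A n - x * (A n - D)"
    using zn DA by (simp add: mult_right_mono)
  also have "\<dots> = x * D + (1 - x) * A n" by (simp add: algebra_simps)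
  also have "\<dots> \<le> x * (A n * Sseq x p n) + (1 - x) * A n"
    using IH x by (simp add: mult_left_mono)
  also have "\<dots> = A n * (p * Sseq x p (Suc n))"
    by (simp add: Sseq_Suc[OF p] algebra_simps)
  also have "\<dots> \<le> A n * (ph (Suc n) * Sseq x p (Suc n))"
    using A0 Sseq_nonneg[OF x, of p "Suc n"] p Suc.prems(2)[of "Suc n"]
    by (intro mult_left_mono mult_right_mono) auto
  also have "\<dots> = A (Suc n) * Sseq x p (Suc n)"
    unfolding A_def by (simp add: prod.nat_ivl_Suc')
  finally show ?case unfolding A_def .
qed

text \<open>For \<open>x = 1\<close> all weights equal \<open>1\<close> and the sum vanishes.\<close>
lemma Dsum_le_fk_prod:
  assumes k: "1 \<le> k" and x: "0 \<le> x" "x \<le> 1"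
    and z: "\<And>i. i < k \<Longrightarrow> x \<le> z i \<and> z i \<le> 1"
    and y: "\<And>i. 1 \<le> i \<Longrightarrow> i \<le> k \<Longrightarrow> 0 \<le> y i \<and> y i \<le> x"
  shows "Dsum z (\<lambda>j. \<Prod>i=1..j. fk k (y i)) k \<le> (\<Prod>i=1..k. fk k (y i))"
proof -
  have fk_nonneg: "0 \<le> fk k (y i)" if "i \<in> {1..k}" for i
    using fk_range[OF k, of "y i"] y[of i] x that by auto
  show ?thesis
  proof (cases "x = 1")
    case True
    then have "z i = 1" if "i < k" for i
      using z[OF that] by simp
    then have "Dsum z (\<lambda>j. \<Prod>i=1..j. fk k (y i)) k = 0"
      unfolding Dsum_def by simp
    moreover have "0 \<le> (\<Prod>i=1..k. fk k (y i))"
      using fk_nonneg by (rule prod_nonneg)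
    ultimately show ?thesis by simp
  next
    case False
    then have x1: "x < 1" using x by simp
    have p_le: "fk k x \<le> fk k (y i)" if "1 \<le> i" "i \<le> k" for i
      using fk_antimono[OF k, of "y i" x] y[OF that] x by simp
    have S: "Sseq x (fk k x) k = 1"
      using Sseq_fk[OF k x(1) x1] .
    have "Dsum z (\<lambda>j. \<Prod>i=1..j. fk k (y i)) k \<le> (\<Prod>i=1..k. fk k (y i)) * Sseq x (fk k x) k"
      by (rule Dsum_le_prod_Sseq[OF x z fk_pos[OF k x(1) x1]]) (use p_le S in simp_all)
    then show ?thesis using S by simp
  qed
qed

lemma Htilde_eq_Dsum:
  assumes k: "1 \<le> k"
  shows "Htilde k y = Dsum (\<lambda>i. y (k+i)) (\<lambda>j. \<Prod>i=1..j. fk k (y i)) k - (\<Prod>i=1..k. fk k (y i))"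
proof -
  have tail: "(\<Prod>j=k+i+1..2*k-1. y j) = (\<Prod>m\<in>{i+1..<k}. y (k+m))" for i
  proof -
    have "{k+i+1..2*k-1} = {(i+1)+k..<k+k}" using k by auto
    then have "(\<Prod>j=k+i+1..2*k-1. y j) = (\<Prod>j\<in>{(i+1)+k..<k+k}. y j)" by simp
    also have "\<dots> = (\<Prod>m\<in>{i+1..<k}. y (m+k))" by (rule prod.shift_bounds_nat_ivl)
    finally show ?thesis by (simp add: add.commute)
  qed
  have "{0..k-1} = {..<k}" using k by auto
  then show ?thesis
    unfolding Htilde_def Dsum_def tail by simp
qed

theorem mainTheorem6:
  fixes k :: nat and y :: "nat \<Rightarrow> real"
  assumes "k \<ge> 1"
    and "0 \<le> y 1"
    and "\<And>i. 1 \<le> i \<Longrightarrow> i < 2*k-1 \<Longrightarrow> y i \<le> y (i+1)"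
    and "y (2*k-1) \<le> 1"
  shows "Htilde k y \<le> 0"
proof -
  have k: "1 \<le> k" using assms(1) .
  have mono: "y a \<le> y b" if "1 \<le> a" "a \<le> b" "b \<le> 2*k-1" for a b
    using lift_Suc_mono_le_ivl[of "{1..<2*k-1}" y a b] assms(3) that by force
  have range: "0 \<le> y i \<and> y i \<le> 1" if "1 \<le> i" "i \<le> 2*k-1" for i
    using mono[of 1 i] mono[of i "2*k-1"] that assms(2,4) by simp
  have "Dsum (\<lambda>i. y (k+i)) (\<lambda>j. \<Prod>i=1..j. fk k (y i)) k \<le> (\<Prod>i=1..k. fk k (y i))"
  proof (rule Dsum_le_fk_prod[OF k, of "y k"])
    show "0 \<le> y k" "y k \<le> 1" using range[of k] k by auto
    show "y k \<le> y (k+i) \<and> y (k+i) \<le> 1" if "i < k" for i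
      using mono[of k "k+i"] range[of "k+i"] that k by simp
    show "0 \<le> y i \<and> y i \<le> y k" if "1 \<le> i" "i \<le> k" for i
      using mono[of i k] range[of i] that by simp
  qed
  then show ?thesis unfolding Htilde_eq_Dsum[OF k] by simp
qed

end
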